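(* Let $n, r$ be positive integers. Then $$m\big(L(K_n),r\big)=\begin{cases}\left\lfloor\dfrac{(r+2)^2}{8}\right\rfloor, & \text{if } n\geqslant\lceil r/2\rceil+2;\\[2mm] \dbinom{n}{2}, & \text{otherwise.}\end{cases}$$
   Context: All graphs are finite, simple and undirected. For a nonnegative integer $r$ and a graph $G$, the $r$-neighbor bootstrap percolation process on $G$ starts with a set $A_0\subseteq V(G)$ of initially active vertices, and for $i\geqslant 1$, $A_i=A_{i-1}\cup\{v\in V(G) : |N(v)\cap A_{i-1}|\geqslant r\}$, where $N(v)$ is the set of neighbors of $v$. The set $A_0$ is a percolating set if $\bigcup_{i\geqslant 0}A_i=V(G)$. $m(G,r)$ denotes the minimum size of a percolating set. $L(G)$ is the line graph of $G$: its vertex set is $E(G)$ and two vertices are adjacent iff the corresponding edges share an endpoint. $K_n$ is the complete graph on $n$ vertices. *)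

theory Defs
  imports Complex_Main
begin

text \<open>A finite simple graph is given by a vertex set V and a symmetric irreflexive
adjacency relation adj. Neighbours of v: the u in V with adj v u.\<close>

definition bp_step :: "'a set \<Rightarrow> ('a \<Rightarrow> 'a \<Rightarrow> bool) \<Rightarrow> nat \<Rightarrow> 'a set \<Rightarrow> 'a set" where
  "bp_step V adj r A = A \<union> {v \<in> V. card {u \<in> V. adj v u \<and> u \<in> A} \<ge> r}"

definition bp_closure :: "'a set \<Rightarrow> ('a \<Rightarrow> 'a \<Rightarrow> bool) \<Rightarrow> nat \<Rightarrow> 'a set \<Rightarrow> 'a set" where
  "bp_closure V adj r A0 = (\<Union>i. (bp_step V adj r ^^ i) A0)"

definition percolating :: "'a set \<Rightarrow> ('a \<Rightarrow> 'a \<Rightarrow> bool) \<Rightarrow> nat \<Rightarrow> 'a set \<Rightarrow> bool" where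
  "percolating V adj r A0 \<longleftrightarrow> A0 \<subseteq> V \<and> bp_closure V adj r A0 = V"

definition min_perc :: "'a set \<Rightarrow> ('a \<Rightarrow> 'a \<Rightarrow> bool) \<Rightarrow> nat \<Rightarrow> nat" where
  "min_perc V adj r = (LEAST k. \<exists>A. percolating V adj r A \<and> card A = k)"

definition Kn_edges :: "nat \<Rightarrow> nat set set" where
  "Kn_edges n = {e. e \<subseteq> {0..<n} \<and> card e = 2}"

definition line_adj :: "'a set \<Rightarrow> 'a set \<Rightarrow> bool" where
  "line_adj e f \<longleftrightarrow> e \<noteq> f \<and> e \<inter> f \<noteq> {}"

end

theory Submission
  imports Defs
begin

(*
  In the line graph of K_n an inactive edge xy is activated as soon as the active edges at x
  and at y number at least r together.

  Upper bound: put s = ceil(r/2). The staircase of edges {k, j} with k < s and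
  k + c <= j < s + c, completed for even r by a matching of rungs {k, k + 1}, activates all
  edges at the vertices 0, ..., s - 1 row by row; afterwards every remaining edge has
  2 s >= r active neighbours. The staircase has s(s + 1)/2 edges, the rungs ceil(s/2).

  Lower bound: linearise the activation of a percolating set A and order the vertices by the
  time at which they first have tau = floor(r/2) + 1 active edges. The i-th vertex in this
  order reaches degree tau with at most i - 1 edges to earlier vertices, so at least
  tau - i + 1 of its edges go to later vertices. Such an edge is a seed: a non-seed edge
  between two unsaturated vertices sees at most 2 tau - 2 <= r active edges, with equality
  only for even r, and then both ends saturate at the same moment. Since the edges switch
  on one at a time, such twins never come in consecutive positions. Summing over the first
  tau vertices gives |A| >= floor((r + 2)^2/8).

  If n < ceil(r/2) + 2 every edge has at most 2(n - 2) < r neighbours, so only the full edge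
  set percolates.
*)

lemma nat_ceiling_half: "nat \<lceil>real r / 2\<rceil> = (r + 1) div 2"
proof (cases "even r")
  case True
  then show ?thesis by (auto elim!: evenE)
next
  case False
  then obtain q where "r = 2 * q + 1"
    by (blast elim: oddE)
  moreover have "\<lceil>real (2 * q + 1) / 2\<rceil> = int q + 1"
    by (simp add: ceiling_eq_iff)
  ultimately show ?thesis by simp
qed

lemma triangle_eq_half_square: "t * (t + 1) div 2 = t\<^sup>2 div 2 + (t + 1) div (2::nat)"
  by (cases "even t") (auto elim!: evenE oddE simp: power2_eq_square algebra_simps)

lemma square_double_div_8: "(2 * t)\<^sup>2 div 8 = t\<^sup>2 div (2::nat)"
  by (simp add: power_mult_distrib)

lemma square_Suc_double_div_8: "(2 * t + 1)\<^sup>2 div 8 = t * (t + 1) div (2::nat)"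
  by (cases "even t") (auto elim!: evenE oddE simp: power2_eq_square algebra_simps)

lemma triangle_add_half: "t * (t + 1) div 2 + (t + 1) div 2 = (t + 1)\<^sup>2 div (2::nat)"
  by (cases "even t") (auto elim!: evenE oddE simp: power2_eq_square algebra_simps)

lemma sum_lessThan_diff: "(\<Sum>k<s. s - k) = s * (s + 1) div (2::nat)"
proof -
  have "(\<Sum>k<s. s - k) = (\<Sum>k<s. Suc k)"
    using sum.nat_diff_reindex[of "\<lambda>k. Suc k" s] by (simp add: Suc_diff_Suc)
  also have "\<dots> = (\<Sum>k<Suc s. k)"
    by (simp add: sum.lessThan_Suc_shift del: sum.lessThan_Suc)
  finally show ?thesis
    by (simp add: lessThan_Suc_atMost atMost_atLeast0 gauss_sum_nat)
qed

lemma card_le_half_if_no_consecutive: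
  fixes K :: "nat set"
  assumes "K \<subseteq> {..<t}" and "\<And>k. k \<in> K \<Longrightarrow> Suc k \<notin> K"
  shows "card K \<le> (t + 1) div 2"
proof -
  have "inj_on (\<lambda>k. k div 2) K"
  proof (rule inj_onI, rule ccontr)
    fix a b assume "a \<in> K" "b \<in> K" "a div 2 = b div 2" "a \<noteq> b"
    from \<open>a div 2 = b div 2\<close> \<open>a \<noteq> b\<close> have "b = Suc a \<or> a = Suc b"
      by presburger
    then show False using assms(2) \<open>a \<in> K\<close> \<open>b \<in> K\<close> by blast
  qed
  moreover have "(\<lambda>k. k div 2) ` K \<subseteq> {..<(t + 1) div 2}"
    using assms(1) by auto
  ultimately show ?thesis
    using card_inj_on_le[of _ K "{..<(t + 1) div 2}"] by simp
qed

section \<open>Bootstrap percolation\<close>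

definition bp_stage :: "'a set \<Rightarrow> ('a \<Rightarrow> 'a \<Rightarrow> bool) \<Rightarrow> nat \<Rightarrow> 'a set \<Rightarrow> nat \<Rightarrow> 'a set" where
  "bp_stage V adj r A t = (bp_step V adj r ^^ t) A"

lemma bp_stage_0 [simp]: "bp_stage V adj r A 0 = A"
  by (simp add: bp_stage_def)

lemma bp_stage_Suc: "bp_stage V adj r A (Suc t) = bp_step V adj r (bp_stage V adj r A t)"
  by (simp add: bp_stage_def)

lemma bp_stage_mono: "t \<le> t' \<Longrightarrow> bp_stage V adj r A t \<subseteq> bp_stage V adj r A t'"
  by (rule lift_Suc_mono_le[of "bp_stage V adj r A"]) (auto simp: bp_stage_Suc bp_step_def)

lemma bp_stage_subset: "A \<subseteq> V \<Longrightarrow> bp_stage V adj r A t \<subseteq> V"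
  by (induction t) (auto simp: bp_stage_Suc bp_step_def)

lemma bp_closure_eq_UN_bp_stage: "bp_closure V adj r A = (\<Union>t. bp_stage V adj r A t)"
  by (simp add: bp_closure_def bp_stage_def)

lemma subset_bp_closure: "A \<subseteq> bp_closure V adj r A"
  unfolding bp_closure_eq_UN_bp_stage by (metis UN_upper UNIV_I bp_stage_0)

lemma bp_closure_subset: "A \<subseteq> V \<Longrightarrow> bp_closure V adj r A \<subseteq> V"
  unfolding bp_closure_eq_UN_bp_stage using bp_stage_subset by blast

lemma finite_subset_bp_stage:
  assumes "finite F" "F \<subseteq> bp_closure V adj r A"
  shows "\<exists>t. F \<subseteq> bp_stage V adj r A t"
  using assms
proof (induction F rule: finite_induct)
  case (insert x F)
  then obtain t t' where "F \<subseteq> bp_stage V adj r A t" "x \<in> bp_stage V adj r A t'"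
    by (auto simp: bp_closure_eq_UN_bp_stage)
  then have "insert x F \<subseteq> bp_stage V adj r A (max t t')"
    using bp_stage_mono[of t "max t t'" V adj r A] bp_stage_mono[of t' "max t t'" V adj r A] by auto
  then show ?case ..
qed simp

lemma bp_closure_step:
  assumes "finite V" "v \<in> V"
    and "r \<le> card {u \<in> V. adj v u \<and> u \<in> bp_closure V adj r A}"
  shows "v \<in> bp_closure V adj r A"
proof -
  let ?N = "{u \<in> V. adj v u \<and> u \<in> bp_closure V adj r A}"
  obtain t where t: "?N \<subseteq> bp_stage V adj r A t"
    using finite_subset_bp_stage[of ?N V adj r A] \<open>finite V\<close> by auto
  have "card ?N \<le> card {u \<in> V. adj v u \<and> u \<in> bp_stage V adj r A t}"
    using t \<open>finite V\<close> by (intro card_mono) auto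
  then have "r \<le> card {u \<in> V. adj v u \<and> u \<in> bp_stage V adj r A t}"
    using assms(3) by linarith
  then have "v \<in> bp_stage V adj r A (Suc t)"
    using \<open>v \<in> V\<close> by (simp add: bp_stage_Suc bp_step_def)
  then show ?thesis
    unfolding bp_closure_eq_UN_bp_stage by blast
qed

lemma bp_closure_eq_if_degree_less:
  assumes "finite V" "A \<subseteq> V" and deg: "\<And>v. v \<in> V \<Longrightarrow> card {u \<in> V. adj v u} < r"
  shows "bp_closure V adj r A = A"
proof -
  have "bp_step V adj r X = X" if "X \<subseteq> V" for X
  proof -
    have "card {u \<in> V. adj v u \<and> u \<in> X} < r" if "v \<in> V" for v
      using card_mono[of "{u \<in> V. adj v u}" "{u \<in> V. adj v u \<and> u \<in> X}"] deg[OF that] \<open>finite V\<close>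
      by fastforce
    then show ?thesis
      using \<open>X \<subseteq> V\<close> by (auto simp: bp_step_def not_le[symmetric])
  qed
  then have "bp_stage V adj r A t = A" for t
    using \<open>A \<subseteq> V\<close> by (induction t) (simp_all add: bp_stage_Suc)
  then show ?thesis
    unfolding bp_closure_eq_UN_bp_stage by simp
qed

lemma min_perc_eqI:
  assumes "\<And>A. percolating V adj r A \<Longrightarrow> m \<le> card A"
    and "percolating V adj r A0" and "card A0 \<le> m"
  shows "min_perc V adj r = m"
  unfolding min_perc_def
proof (rule Least_equality)
  show "\<exists>A. percolating V adj r A \<and> card A = m"
    using assms by (metis le_antisym)
qed (use assms(1) in blast)

section \<open>The line graph of the complete graph\<close>

lemma finite_Kn_edges: "finite (Kn_edges n)"
proof (rule finite_subset)
  show "Kn_edges n \<subseteq> Pow {0..<n}"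
    unfolding Kn_edges_def by auto
qed simp

lemma Kn_edges_iff: "e \<in> Kn_edges n \<longleftrightarrow> (\<exists>x y. x \<noteq> y \<and> x < n \<and> y < n \<and> e = {x, y})"
  unfolding Kn_edges_def card_2_iff by auto blast

lemma insert_in_Kn_edges [simp]: "{x, y} \<in> Kn_edges n \<longleftrightarrow> x \<noteq> y \<and> x < n \<and> y < n"
  unfolding Kn_edges_def by (auto simp: card_2_iff doubleton_eq_iff)

lemma card_Kn_edges: "card (Kn_edges n) = n choose 2"
  unfolding Kn_edges_def using n_subsets[of "{0..<n}" 2] by simp

lemma Kn_edges_at_vertex:
  assumes "x < n"
  shows "{e \<in> Kn_edges n. x \<in> e} = (\<lambda>y. {x, y}) ` ({..<n} - {x})"
  using assms by (auto simp: Kn_edges_iff insert_commute)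

lemma card_Kn_edges_at_vertex:
  assumes "x < n"
  shows "card {e \<in> Kn_edges n. x \<in> e} = n - 1"
proof -
  have "inj_on (\<lambda>y. {x, y}) ({..<n} - {x})"
    by (auto simp: inj_on_def doubleton_eq_iff)
  then show ?thesis
    using assms by (simp add: Kn_edges_at_vertex card_image)
qed

lemma card_line_adj_Kn_edges:
  assumes "e \<in> Kn_edges n"
  shows "card {f \<in> Kn_edges n. line_adj e f} \<le> 2 * (n - 2)"
proof -
  obtain x y where xy: "x \<noteq> y" "x < n" "y < n" "e = {x, y}"
    using assms by (auto simp: Kn_edges_iff)
  let ?D = "{..<n} - {x, y}"
  have "{f \<in> Kn_edges n. line_adj e f} \<subseteq> (\<lambda>z. {x, z}) ` ?D \<union> (\<lambda>z. {y, z}) ` ?D"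
    using xy by (auto simp: Kn_edges_iff line_adj_def insert_commute)
  then have "card {f \<in> Kn_edges n. line_adj e f} \<le> card ((\<lambda>z. {x, z}) ` ?D \<union> (\<lambda>z. {y, z}) ` ?D)"
    by (intro card_mono) auto
  also have "\<dots> \<le> card ?D + card ?D"
    by (meson card_Un_le card_image_le finite_Diff finite_lessThan add_mono order_trans)
  also have "card ?D = n - 2"
    using xy by (simp add: card_Diff_subset)
  finally show ?thesis by simp
qed

lemma min_perc_Kn_edges_if_degree_less:
  assumes "2 * (n - 2) < r"
  shows "min_perc (Kn_edges n) line_adj r = n choose 2"
proof -
  have "bp_closure (Kn_edges n) line_adj r A = A" if "A \<subseteq> Kn_edges n" for A
    using bp_closure_eq_if_degree_less[OF finite_Kn_edges that] card_line_adj_Kn_edges assms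
    by (meson le_less_trans)
  then have "percolating (Kn_edges n) line_adj r A \<longleftrightarrow> A = Kn_edges n" for A
    unfolding percolating_def by auto
  then show ?thesis
    using min_perc_eqI[of "Kn_edges n" line_adj r "n choose 2" "Kn_edges n"] card_Kn_edges by simp
qed

lemma insert_in_bp_closure_Kn:
  fixes n r :: nat and A :: "nat set set" and X Y :: "nat set"
  defines "cl \<equiv> bp_closure (Kn_edges n) line_adj r A"
  assumes "x \<noteq> y" "x < n" "y < n"
    and "X \<subseteq> {..<n} - {x, y}" "Y \<subseteq> {..<n} - {x, y}"
    and "\<And>z. z \<in> X \<Longrightarrow> {x, z} \<in> cl" "\<And>z. z \<in> Y \<Longrightarrow> {y, z} \<in> cl"
    and "r \<le> card X + card Y"
  shows "{x, y} \<in> cl"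
  unfolding cl_def
proof (rule bp_closure_step[OF finite_Kn_edges])
  let ?K = "(\<lambda>z. {x, z}) ` X \<union> (\<lambda>z. {y, z}) ` Y"
  have "finite X" "finite Y"
    using assms(5,6) by (auto intro: finite_subset)
  moreover have "inj_on (\<lambda>z. {x, z}) X" "inj_on (\<lambda>z. {y, z}) Y"
    by (auto simp: inj_on_def doubleton_eq_iff)
  moreover have "(\<lambda>z. {x, z}) ` X \<inter> (\<lambda>z. {y, z}) ` Y = {}"
    using assms(2,5,6) by (auto simp: doubleton_eq_iff)
  ultimately have "card ?K = card X + card Y"
    by (simp add: card_Un_disjoint card_image)
  moreover have "?K \<subseteq> {f \<in> Kn_edges n. line_adj {x, y} f \<and> f \<in> cl}"
    using assms(2-8) by (fastforce simp: line_adj_def doubleton_eq_iff)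
  ultimately show "r \<le> card {f \<in> Kn_edges n. line_adj {x, y} f \<and> f \<in> bp_closure (Kn_edges n) line_adj r A}"
    using assms(9) card_mono[of "{f \<in> Kn_edges n. line_adj {x, y} f \<and> f \<in> cl}" ?K] finite_Kn_edges
    unfolding cl_def by fastforce
qed (use assms in simp)

section \<open>Staircase percolating sets\<close>

definition staircase :: "nat \<Rightarrow> nat \<Rightarrow> nat set set" where
  "staircase s c = (\<lambda>(k, j). {k, j}) ` {(k, j). k < s \<and> k + c \<le> j \<and> j < s + c}"

definition rungs :: "nat \<Rightarrow> nat set set" where
  "rungs s = (\<lambda>k. {k, Suc k}) ` {k. k < s \<and> odd (s - k)}"

lemma insert_in_staircase: "k < s \<Longrightarrow> k + c \<le> j \<Longrightarrow> j < s + c \<Longrightarrow> {k, j} \<in> staircase s c"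
  unfolding staircase_def by (auto intro!: image_eqI[where x = "(k, j)"])

lemma insert_in_rungs: "k < s \<Longrightarrow> odd (s - k) \<Longrightarrow> {k, Suc k} \<in> rungs s"
  unfolding rungs_def by blast

lemma staircase_subset_Kn_edges: "0 < c \<Longrightarrow> s + c \<le> n \<Longrightarrow> staircase s c \<subseteq> Kn_edges n"
  unfolding staircase_def by auto

lemma rungs_subset_Kn_edges: "s < n \<Longrightarrow> rungs s \<subseteq> Kn_edges n"
  unfolding rungs_def by auto

lemma card_staircase: "card (staircase s c) \<le> s * (s + 1) div 2"
proof -
  have pairs: "{(k, j). k < s \<and> k + c \<le> j \<and> j < s + c} = (SIGMA k:{..<s}. {k + c..<s + c})"
    by auto
  have "card (staircase s c) \<le> card (SIGMA k:{..<s}. {k + c..<s + c})"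
    unfolding staircase_def pairs by (rule card_image_le) simp
  also have "\<dots> = s * (s + 1) div 2"
    by (simp add: sum_lessThan_diff)
  finally show ?thesis .
qed

lemma card_rungs: "card (rungs s) \<le> (s + 1) div 2"
proof -
  have "card {k. k < s \<and> odd (s - k)} \<le> (s + 1) div 2"
    by (rule card_le_half_if_no_consecutive) auto
  then show ?thesis
    unfolding rungs_def using card_image_le[of "{k. k < s \<and> odd (s - k)}" "\<lambda>k. {k, Suc k}"] by simp
qed

locale staircase_seeds =
  fixes n r s c :: nat and A :: "nat set set"
  assumes A_subset: "A \<subseteq> Kn_edges n"
    and staircase_subset: "staircase s c \<subseteq> A"
    and c_pos: "0 < c" and s_c_le: "s + c \<le> n" and c_large: "n = s + c \<or> s < c"
    and r_le: "r \<le> 2 * s"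
    \<comment> \<open>For \<open>r = 2 s\<close> the staircase leaves each step of a row one active edge short;
      a seed at the far end supplies it.\<close>
    and rung: "\<And>k i. 2 * s \<le> r \<Longrightarrow> k < i \<Longrightarrow> i \<le> s \<Longrightarrow> {k, i} \<notin> A \<Longrightarrow>
      \<exists>p. k < p \<and> p < i + c \<and> p \<noteq> i \<and> {i, p} \<in> A"
begin

abbreviation active :: "nat \<Rightarrow> nat \<Rightarrow> bool" where
  "active x y \<equiv> {x, y} \<in> bp_closure (Kn_edges n) line_adj r A"

lemma active_if_seed: "{x, y} \<in> A \<Longrightarrow> active x y"
  by (rule subsetD[OF subset_bp_closure])

lemma active_staircase: "k < s \<Longrightarrow> k + c \<le> j \<Longrightarrow> j < s + c \<Longrightarrow> active k j"
  by (intro active_if_seed subsetD[OF staircase_subset] insert_in_staircase)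

definition rows_active :: "nat \<Rightarrow> bool" where
  "rows_active k \<longleftrightarrow> (\<forall>x<k. \<forall>y<n. x \<noteq> y \<longrightarrow> active x y)"

lemma active_if_rows_active: "rows_active k \<Longrightarrow> x < k \<Longrightarrow> y < n \<Longrightarrow> x \<noteq> y \<Longrightarrow> active y x"
  unfolding rows_active_def by (simp add: insert_commute)

lemma seed_neighbours_beyond_staircase:
  assumes "k < i" "i \<le> s" "{k, i} \<notin> A"
  obtains P where "P \<subseteq> {p. k < p \<and> p < i + c \<and> p \<noteq> i \<and> {i, p} \<in> A}" "r + 1 \<le> 2 * s + card P"
proof (cases "r < 2 * s")
  case True
  then show ?thesis
    using that[of "{}"] by simp
next
  case False
  then obtain p where "k < p \<and> p < i + c \<and> p \<noteq> i \<and> {i, p} \<in> A"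
    using rung assms by (meson not_less)
  then show ?thesis
    using that[of "{p}"] r_le by simp
qed

lemma active_within_row:
  assumes rows: "rows_active k" and "k < i" "i \<le> s" "i < k + c"
  shows "active k i"
  using assms(2-4)
proof (induction i rule: less_induct)
  case (less i)
  show ?case
  proof (cases "{k, i} \<in> A")
    case True
    then show ?thesis by (rule active_if_seed)
  next
    case False
    then obtain P where P: "P \<subseteq> {p. k < p \<and> p < i + c \<and> p \<noteq> i \<and> {i, p} \<in> A}"
      "r + 1 \<le> 2 * s + card P"
      using seed_neighbours_beyond_staircase less.prems by blast
    have "k < n" "i < n"
      using less.prems s_c_le c_pos by linarith+
    have "finite P"
      using P(1) by (rule finite_subset) auto
    have P_lt: "p < n" if "p \<in> P" for p
      using that P(1) A_subset by auto
    let ?X = "{..<k} \<union> {k<..<i} \<union> {k + c..<s + c}"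
    let ?Y = "{..<k} \<union> {i + c..<s + c} \<union> P"
    show ?thesis
    proof (rule insert_in_bp_closure_Kn[of k i n ?X ?Y])
      show "?X \<subseteq> {..<n} - {k, i}" "?Y \<subseteq> {..<n} - {k, i}"
        using less.prems s_c_le P(1) P_lt by auto
      show "active k z" if "z \<in> ?X" for z
        using that less.IH[of z] less.prems active_if_rows_active[OF rows, of z k]
          active_staircase[of k z] \<open>k < n\<close> by auto
      show "active i z" if "z \<in> ?Y" for z
        using that P(1) less.prems active_if_rows_active[OF rows, of z i] active_staircase[of i z]
          active_if_seed[of i z] \<open>i < n\<close> by auto
      have "card ?X = k + (i - Suc k) + (s - k)"
        using less.prems by (subst card_Un_disjoint; auto)+
      moreover have "card ?Y = k + (s - i) + card P"
        using less.prems P(1) \<open>finite P\<close> by (subst card_Un_disjoint; auto)+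
      ultimately show "r \<le> card ?X + card ?Y"
        using less.prems P(2) by linarith
    qed (use less.prems \<open>k < n\<close> \<open>i < n\<close> in auto)
  qed
qed

lemma active_beyond_row:
  assumes rows: "rows_active k" and "k < s" "s < y" "y < n"
  shows "active k y"
proof (cases "k + c \<le> y \<and> y < s + c")
  case True
  then show ?thesis using active_staircase \<open>k < s\<close> by simp
next
  case False
  have "s < k + c"
    using False assms(3,4) c_large by linarith
  let ?X = "{..<k} \<union> {k<..s} \<union> {k + c..<s + c}"
  show ?thesis
  proof (rule insert_in_bp_closure_Kn[of k y n ?X "{..<k}"])
    show "k \<noteq> y" "k < n" "y < n"
      using assms by auto
    show "?X \<subseteq> {..<n} - {k, y}"
      using assms False s_c_le c_pos by auto
    show "{..<k} \<subseteq> {..<n} - {k, y}"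
      using assms by auto
    show "active k z" if "z \<in> ?X" for z
      using that assms active_if_rows_active[OF rows, of z k] active_within_row[OF rows, of z]
        active_staircase[of k z] \<open>s < k + c\<close> by auto
    show "active y z" if "z \<in> {..<k}" for z
      using that active_if_rows_active[OF rows] assms by simp
    have "card ?X = k + (s - k) + (s - k)"
      using \<open>k < s\<close> \<open>s < k + c\<close> by (subst card_Un_disjoint; auto)+
    then show "r \<le> card ?X + card {..<k}"
      using r_le \<open>k < s\<close> by simp
  qed
qed

lemma rows_active_Suc:
  assumes "rows_active k" "k < s"
  shows "rows_active (Suc k)"
  unfolding rows_active_def
proof (intro allI impI)
  fix x y assume "x < Suc k" "y < n" "x \<noteq> y"
  then consider "x < k" | "x = k" "y < k" | "x = k" "k < y" "y \<le> s" | "x = k" "s < y"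
    by linarith
  then show "active x y"
  proof cases
    case 1
    then show ?thesis using assms(1) \<open>y < n\<close> \<open>x \<noteq> y\<close> by (simp add: rows_active_def)
  next
    case 2
    then show ?thesis using active_if_rows_active[OF assms(1)] assms(2) s_c_le by simp
  next
    case 3
    show ?thesis
    proof (cases "y < k + c")
      case True
      then show ?thesis using 3 active_within_row[OF assms(1)] by simp
    next
      case False
      then show ?thesis using 3 active_staircase[of k y] assms(2) c_pos by simp
    qed
  next
    case 4
    then show ?thesis using active_beyond_row[OF assms(1,2)] \<open>y < n\<close> by simp
  qed
qed

lemma rows_active_s: "rows_active s"
proof -
  have "rows_active k" if "k \<le> s" for k
    using that by (induction k) (simp_all add: rows_active_Suc, simp add: rows_active_def)
  then show ?thesis by simp
qed

lemma bp_closure_eq_Kn_edges: "bp_closure (Kn_edges n) line_adj r A = Kn_edges n"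
proof
  show "bp_closure (Kn_edges n) line_adj r A \<subseteq> Kn_edges n"
    using A_subset by (rule bp_closure_subset)
  show "Kn_edges n \<subseteq> bp_closure (Kn_edges n) line_adj r A"
  proof
    fix e assume "e \<in> Kn_edges n"
    then obtain x y where xy: "x \<noteq> y" "x < n" "y < n" "e = {x, y}"
      by (auto simp: Kn_edges_iff)
    consider "x < s" | "y < s" | "s \<le> x" "s \<le> y"
      by linarith
    then show "e \<in> bp_closure (Kn_edges n) line_adj r A"
    proof cases
      case 1
      then show ?thesis using active_if_rows_active[OF rows_active_s] xy by (simp add: insert_commute)
    next
      case 2
      then show ?thesis using active_if_rows_active[OF rows_active_s] xy by simp
    next
      case 3
      show ?thesis
        unfolding \<open>e = {x, y}\<close>
      proof (rule insert_in_bp_closure_Kn[of x y n "{..<s}" "{..<s}"])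
        show "active x z" "active y z" if "z \<in> {..<s}" for z
          using that 3 xy active_if_rows_active[OF rows_active_s] by auto
      qed (use xy 3 r_le s_c_le in auto)
    qed
  qed
qed

end

lemma percolating_staircase:
  assumes "0 < c" "s + c \<le> n" "n = s + c \<or> s < c" "r < 2 * s"
  shows "percolating (Kn_edges n) line_adj r (staircase s c)"
proof -
  interpret staircase_seeds n r s c "staircase s c"
    by unfold_locales (use assms staircase_subset_Kn_edges in auto)
  show ?thesis
    unfolding percolating_def using A_subset bp_closure_eq_Kn_edges by simp
qed

lemma percolating_staircase_rungs:
  assumes "1 < c" "s + c \<le> n" "n = s + c \<or> s < c" "r \<le> 2 * s"
  shows "percolating (Kn_edges n) line_adj r (staircase s c \<union> rungs s)"
proof -
  let ?A = "staircase s c \<union> rungs s"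
  have rung: "\<exists>p. k < p \<and> p < i + c \<and> p \<noteq> i \<and> {i, p} \<in> ?A"
    if "k < i" "i \<le> s" "{k, i} \<notin> ?A" for k i
  proof (cases "odd (s - i)")
    case True
    then have "i < s"
      using \<open>i \<le> s\<close> by (metis diff_is_0_eq' even_zero le_neq_implies_less)
    then show ?thesis
      using True insert_in_rungs[of i s] that(1) assms(1) by (intro exI[of _ "Suc i"]) simp
  next
    case False
    have "i \<noteq> Suc k"
      using that insert_in_rungs[of k s] False by (auto simp: Suc_diff_Suc[symmetric])
    then have "odd (s - (i - 1))" "i - 1 < s" "Suc (i - 1) = i"
      using False that(1,2) by (simp_all add: Suc_diff_le)
    then have "{i - 1, i} \<in> ?A"
      using insert_in_rungs[of "i - 1" s] by simp
    then show ?thesis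
      using \<open>i \<noteq> Suc k\<close> that(1) by (intro exI[of _ "i - 1"]) (auto simp: insert_commute)
  qed
  interpret staircase_seeds n r s c ?A
  proof
    show "?A \<subseteq> Kn_edges n"
      using assms staircase_subset_Kn_edges[of c s n] rungs_subset_Kn_edges[of s n] by auto
  qed (use assms rung in auto)
  show ?thesis
    unfolding percolating_def using A_subset bp_closure_eq_Kn_edges by simp
qed

lemma upper_bound:
  assumes "0 < r" "(r + 1) div 2 + 2 \<le> n"
  shows "\<exists>A. percolating (Kn_edges n) line_adj r A \<and> card A \<le> (r + 2)\<^sup>2 div 8"
proof -
  define s where "s = (r + 1) div 2"
  define c where "c = (if n \<le> 2 * s + 1 then n - s else s + 1)"
  have c: "1 < c" "s + c \<le> n" "n = s + c \<or> s < c"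
    using assms unfolding c_def s_def by auto
  show ?thesis
  proof (cases "even r")
    case True
    then have r: "r = 2 * s"
      unfolding s_def by presburger
    have "card (staircase s c \<union> rungs s) \<le> s * (s + 1) div 2 + (s + 1) div 2"
      using card_staircase[of s c] card_rungs[of s] card_Un_le[of "staircase s c" "rungs s"] by linarith
    also have "\<dots> = (r + 2)\<^sup>2 div 8"
      using square_double_div_8[of "s + 1"] triangle_add_half[of s] r by (simp add: algebra_simps)
    finally show ?thesis
      using percolating_staircase_rungs[OF c] r by auto
  next
    case False
    then have r: "r + 2 = 2 * s + 1" "r < 2 * s"
      unfolding s_def by presburger+
    have "card (staircase s c) \<le> (r + 2)\<^sup>2 div 8"
      using card_staircase[of s c] square_Suc_double_div_8[of s] unfolding r(1) by simp
    then show ?thesis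
      using percolating_staircase[OF _ c(2,3) r(2)] c(1) by auto
  qed
qed

section \<open>Saturation order of a percolating set\<close>

locale Kn_line_percolation =
  fixes n r :: nat and A :: "nat set set"
  assumes A_subset: "A \<subseteq> Kn_edges n"
    and percolates: "bp_closure (Kn_edges n) line_adj r A = Kn_edges n"
begin

abbreviation stage :: "nat \<Rightarrow> nat set set" where
  "stage \<equiv> bp_stage (Kn_edges n) line_adj r A"

definition activation_round :: "nat set \<Rightarrow> nat" where
  "activation_round e = (LEAST t. e \<in> stage t)"

lemma in_stage_activation_round: "e \<in> Kn_edges n \<Longrightarrow> e \<in> stage (activation_round e)"
  unfolding activation_round_def
  by (rule LeastI_ex) (use percolates in \<open>auto simp: bp_closure_eq_UN_bp_stage\<close>)

lemma activation_round_le: "e \<in> stage t \<Longrightarrow> activation_round e \<le> t"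
  unfolding activation_round_def by (rule Least_le)

lemma activation_round_eq_0_iff: "e \<in> Kn_edges n \<Longrightarrow> activation_round e = 0 \<longleftrightarrow> e \<in> A"
  using in_stage_activation_round[of e] activation_round_le[of e 0] by auto

lemma card_neighbours_activated_earlier:
  assumes "e \<in> Kn_edges n" "e \<notin> A"
  shows "r \<le> card {f \<in> Kn_edges n. line_adj e f \<and> activation_round f < activation_round e}"
proof -
  obtain t where t: "activation_round e = Suc t"
    using activation_round_eq_0_iff[OF assms(1)] assms(2) not0_implies_Suc by blast
  have "e \<in> bp_step (Kn_edges n) line_adj r (stage t)"
    using in_stage_activation_round[OF assms(1)] t by (simp add: bp_stage_Suc)
  moreover have "e \<notin> stage t"
    using activation_round_le[of e t] t by auto
  ultimately have "r \<le> card {f \<in> Kn_edges n. line_adj e f \<and> f \<in> stage t}"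
    by (simp add: bp_step_def)
  also have "\<dots> \<le> card {f \<in> Kn_edges n. line_adj e f \<and> activation_round f < activation_round e}"
    using t by (intro card_mono) (auto intro: finite_subset[OF _ finite_Kn_edges] dest!: activation_round_le)
  finally show ?thesis .
qed

text \<open>Timestamps linearise the activation rounds: the non-seed edges switch on one at a time.\<close>

definition edge_index :: "nat set \<Rightarrow> nat" where
  "edge_index = (SOME h. bij_betw h (Kn_edges n) {..<card (Kn_edges n)})"

lemma bij_betw_edge_index: "bij_betw edge_index (Kn_edges n) {..<card (Kn_edges n)}"
  unfolding edge_index_def lessThan_atLeast0
  by (rule someI_ex[OF ex_bij_betw_finite_nat[OF finite_Kn_edges]])

definition timestamp :: "nat set \<Rightarrow> nat" where
  "timestamp e = (if e \<in> A then 0 else Suc (activation_round e * card (Kn_edges n) + edge_index e))"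

lemma timestamp_less:
  assumes "e \<in> Kn_edges n" "f \<in> Kn_edges n" "e \<notin> A"
    and "activation_round f < activation_round e"
  shows "timestamp f < timestamp e"
proof -
  let ?N = "card (Kn_edges n)"
  have "activation_round f * ?N + edge_index f < Suc (activation_round f) * ?N"
    using bij_betw_apply[OF bij_betw_edge_index assms(2)] by simp
  also have "\<dots> \<le> activation_round e * ?N"
    using assms(4) by (intro mult_le_mono1) simp
  finally show ?thesis
    using assms(3) by (simp add: timestamp_def)
qed

lemma timestamp_inj:
  assumes "e \<in> Kn_edges n - A" "f \<in> Kn_edges n - A" "timestamp e = timestamp f"
  shows "e = f"
proof -
  let ?N = "card (Kn_edges n)"
  have "(activation_round e * ?N + edge_index e) mod ?N = (activation_round f * ?N + edge_index f) mod ?N"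
    using assms by (simp add: timestamp_def)
  then have "edge_index e = edge_index f"
    using bij_betw_apply[OF bij_betw_edge_index] assms(1,2) by simp
  then show ?thesis
    using bij_betw_imp_inj_on[OF bij_betw_edge_index] assms(1,2) by (auto dest: inj_onD)
qed

definition degree_before :: "nat \<Rightarrow> nat \<Rightarrow> nat" where
  "degree_before x i = card {f \<in> Kn_edges n. x \<in> f \<and> timestamp f < i}"

lemma degree_before_0 [simp]: "degree_before x 0 = 0"
  by (simp add: degree_before_def)

lemma degree_before_mono: "i \<le> j \<Longrightarrow> degree_before x i \<le> degree_before x j"
  unfolding degree_before_def
  by (rule card_mono) (auto intro: finite_subset[OF _ finite_Kn_edges])

lemma degree_before_Suc:
  assumes "f \<in> Kn_edges n" "x \<in> f" "timestamp f = i"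
  shows "Suc (degree_before x i) \<le> degree_before x (Suc i)"
proof -
  have "Suc (degree_before x i) = card (insert f {g \<in> Kn_edges n. x \<in> g \<and> timestamp g < i})"
    unfolding degree_before_def using assms(3) finite_Kn_edges by simp
  also have "\<dots> \<le> degree_before x (Suc i)"
    unfolding degree_before_def using assms finite_Kn_edges by (intro card_mono) auto
  finally show ?thesis .
qed

lemma degree_before_eventually: "x < n \<Longrightarrow> \<exists>i. degree_before x i = n - 1"
proof -
  assume "x < n"
  define i where "i = Suc (Max (timestamp ` Kn_edges n))"
  have "timestamp f < i" if "f \<in> Kn_edges n" for f
    using that finite_Kn_edges unfolding i_def by (simp add: le_imp_less_Suc)
  then have "degree_before x i = card {f \<in> Kn_edges n. x \<in> f}"
    unfolding degree_before_def by metis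
  then show ?thesis
    using card_Kn_edges_at_vertex[OF \<open>x < n\<close>] by auto
qed

lemma degree_sum_at_timestamp:
  assumes "{x, y} \<in> Kn_edges n" "{x, y} \<notin> A"
  shows "r \<le> degree_before x (timestamp {x, y}) + degree_before y (timestamp {x, y})"
proof -
  let ?e = "{x, y}" and ?before = "\<lambda>z. {f \<in> Kn_edges n. z \<in> f \<and> timestamp f < timestamp {x, y}}"
  have "{f \<in> Kn_edges n. line_adj ?e f \<and> activation_round f < activation_round ?e} \<subseteq> ?before x \<union> ?before y"
    using timestamp_less[OF assms(1) _ assms(2)] by (auto simp: line_adj_def)
  then have "card {f \<in> Kn_edges n. line_adj ?e f \<and> activation_round f < activation_round ?e}
      \<le> card (?before x \<union> ?before y)"
    by (intro card_mono) (auto intro: finite_subset[OF _ finite_Kn_edges])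
  also have "\<dots> \<le> degree_before x (timestamp ?e) + degree_before y (timestamp ?e)"
    unfolding degree_before_def by (rule card_Un_le)
  finally show ?thesis
    using card_neighbours_activated_earlier[OF assms] by linarith
qed

end

locale Kn_line_saturation = Kn_line_percolation +
  fixes tau :: nat
  assumes tau_pos: "0 < tau" and tau_less: "tau < n" and tau_le: "2 * tau \<le> r + 2"
begin

definition saturation_time :: "nat \<Rightarrow> nat" where
  "saturation_time x = (LEAST i. tau \<le> degree_before x i)"

lemma tau_le_degree_before_saturation_time:
  assumes "x < n"
  shows "tau \<le> degree_before x (saturation_time x)"
proof -
  obtain i where "degree_before x i = n - 1"
    using degree_before_eventually[OF assms] ..
  then have "tau \<le> degree_before x i"
    using tau_less by simp
  then show ?thesis
    unfolding saturation_time_def by (rule LeastI)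
qed

lemma saturation_time_le: "tau \<le> degree_before x i \<Longrightarrow> saturation_time x \<le> i"
  unfolding saturation_time_def by (rule Least_le)

lemma degree_before_less_tau: "i < saturation_time x \<Longrightarrow> degree_before x i < tau"
  using saturation_time_le leD le_less_linear by blast

lemma degree_before_less_tau_iff: "x < n \<Longrightarrow> degree_before x i < tau \<longleftrightarrow> i < saturation_time x"
  using degree_before_less_tau degree_before_mono[of "saturation_time x" i x]
    tau_le_degree_before_saturation_time[of x] by (meson leI order.trans not_le)

lemma saturation_time_pos: "x < n \<Longrightarrow> 0 < saturation_time x"
  using tau_le_degree_before_saturation_time[of x] tau_pos by (cases "saturation_time x") auto

lemma edge_at_saturation_time:
  assumes "x < n"
  obtains f where "f \<in> Kn_edges n" "x \<in> f" "timestamp f = saturation_time x - 1"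
proof -
  have "\<exists>f\<in>Kn_edges n. x \<in> f \<and> timestamp f = saturation_time x - 1"
  proof (rule ccontr)
    assume "\<not> ?thesis"
    then have "{f \<in> Kn_edges n. x \<in> f \<and> timestamp f < saturation_time x}
        = {f \<in> Kn_edges n. x \<in> f \<and> timestamp f < saturation_time x - 1}"
      by fastforce
    then have "degree_before x (saturation_time x) = degree_before x (saturation_time x - 1)"
      by (simp add: degree_before_def)
    then show False
      using tau_le_degree_before_saturation_time[OF assms] saturation_time_pos[OF assms]
        degree_before_less_tau[of "saturation_time x - 1" x] by simp
  qed
  then show thesis
    using that by blast
qed

text \<open>Beyond the seeds, edges switch on one at a time, so a single edge is responsible
  for all vertices saturating at the same time \<open>t \<ge> 2\<close>.\<close>

lemma no_three_saturate_together:
  assumes "x < n" "y < n" "z < n" "x \<noteq> y" "y \<noteq> z" "x \<noteq> z"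
    and "saturation_time y = saturation_time x" "saturation_time z = saturation_time x"
    and "2 \<le> saturation_time x"
  shows False
proof -
  obtain f where f: "f \<in> Kn_edges n" "x \<in> f" "timestamp f = saturation_time x - 1"
    using edge_at_saturation_time[OF assms(1)] .
  obtain g where g: "g \<in> Kn_edges n" "y \<in> g" "timestamp g = saturation_time x - 1"
    using edge_at_saturation_time[OF assms(2)] assms(7) by metis
  obtain h where h: "h \<in> Kn_edges n" "z \<in> h" "timestamp h = saturation_time x - 1"
    using edge_at_saturation_time[OF assms(3)] assms(8) by metis
  have "f \<notin> A" "g \<notin> A" "h \<notin> A"
    using f(3) g(3) h(3) assms(9) by (auto simp: timestamp_def)
  then have "g = f" "h = f"
    using timestamp_inj f(1,3) g(1,3) h(1,3) by auto
  then have "{x, y, z} \<subseteq> f"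
    using f(2) g(2) h(2) by simp
  moreover have "finite f" "card f = 2"
    using f(1) by (auto simp: Kn_edges_iff)
  ultimately have "card {x, y, z} \<le> 2"
    using card_mono by metis
  then show False
    using assms(4-6) by simp
qed

definition precedes :: "nat \<Rightarrow> nat \<Rightarrow> bool" where
  "precedes x y \<longleftrightarrow> saturation_time x < saturation_time y \<or> (saturation_time x = saturation_time y \<and> x < y)"

lemma precedes_irrefl: "\<not> precedes x x"
  by (simp add: precedes_def)

lemma precedes_trans: "precedes x y \<Longrightarrow> precedes y z \<Longrightarrow> precedes x z"
  by (auto simp: precedes_def)

lemma precedes_total: "x \<noteq> y \<Longrightarrow> precedes x y \<or> precedes y x"
  by (auto simp: precedes_def)

lemma saturation_time_mono: "precedes x y \<Longrightarrow> saturation_time x \<le> saturation_time y"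
  by (auto simp: precedes_def)

definition twins :: "nat \<Rightarrow> nat set" where
  "twins x = {y \<in> {..<n}. precedes x y \<and> saturation_time y = saturation_time x \<and> 2 \<le> saturation_time x}"

lemma card_twins: "x < n \<Longrightarrow> card (twins x) \<le> 1"
  using no_three_saturate_together[of x] precedes_irrefl
  by (fastforce simp: twins_def card_le_Suc0_iff_eq)

lemma saturation_times_if_tight:
  assumes "{x, y} \<in> Kn_edges n" "{x, y} \<notin> A"
    and "timestamp {x, y} < saturation_time x" "timestamp {x, y} < saturation_time y"
  shows "2 * tau = r + 2" "saturation_time x = Suc (timestamp {x, y})"
    "saturation_time y = Suc (timestamp {x, y})"
proof -
  let ?i = "timestamp {x, y}"
  have "x < n" "y < n"
    using assms(1) by simp_all
  then have "degree_before x ?i < tau" "degree_before y ?i < tau"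
    using assms(3,4) degree_before_less_tau_iff by blast+
  moreover have "r \<le> degree_before x ?i + degree_before y ?i"
    using degree_sum_at_timestamp[OF assms(1,2)] .
  ultimately have tight: "2 * tau = r + 2" "Suc (degree_before x ?i) = tau" "Suc (degree_before y ?i) = tau"
    using tau_le by linarith+
  then show "2 * tau = r + 2" by simp
  have "tau \<le> degree_before x (Suc ?i)" "tau \<le> degree_before y (Suc ?i)"
    using degree_before_Suc[of "{x, y}" x ?i] degree_before_Suc[of "{x, y}" y ?i] assms(1) tight(2,3)
    by simp_all
  then show "saturation_time x = Suc ?i" "saturation_time y = Suc ?i"
    using saturation_time_le assms(3,4) by (meson Suc_leI le_antisym)+
qed

lemma early_edge_partner:
  assumes "x < n" "f \<in> Kn_edges n" "x \<in> f" "timestamp f < saturation_time x"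
  obtains y where "f = {x, y}" "y < n"
    "precedes y x \<or> (precedes x y \<and> {x, y} \<in> A) \<or> (y \<in> twins x \<and> 2 * tau = r + 2)"
proof -
  obtain y where y: "f = {x, y}" "y < n" "y \<noteq> x"
    using assms(2,3) by (auto simp: Kn_edges_iff insert_commute)
  have "precedes y x \<or> (precedes x y \<and> {x, y} \<in> A) \<or> (y \<in> twins x \<and> 2 * tau = r + 2)"
  proof (cases "f \<in> A \<or> saturation_time y \<le> timestamp f")
    case True
    then show ?thesis
      using precedes_total[OF y(3)] assms(4) y(1) by (auto simp: precedes_def)
  next
    case False
    then have "2 * tau = r + 2" "saturation_time x = saturation_time y" "2 \<le> saturation_time x"
      using saturation_times_if_tight[of x y] assms y by (auto simp: timestamp_def)
    then show ?thesis
      using precedes_total[OF y(3)] y(2) by (auto simp: twins_def)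
  qed
  then show thesis
    using that y(1,2) by blast
qed

definition rank :: "nat \<Rightarrow> nat" where
  "rank x = card {y \<in> {..<n}. precedes y x}"

definition later_seeds :: "nat \<Rightarrow> nat" where
  "later_seeds x = card {y \<in> {..<n}. precedes x y \<and> {x, y} \<in> A}"

lemma tau_le_rank_add_later_seeds:
  assumes "x < n"
  shows "tau \<le> rank x + later_seeds x + (if 2 * tau = r + 2 \<and> twins x \<noteq> {} then 1 else 0)"
proof -
  let ?E = "{y \<in> {..<n}. precedes y x}" and ?L = "{y \<in> {..<n}. precedes x y \<and> {x, y} \<in> A}"
    and ?T = "if 2 * tau = r + 2 then twins x else {}"
  have "{f \<in> Kn_edges n. x \<in> f \<and> timestamp f < saturation_time x} \<subseteq> (\<lambda>y. {x, y}) ` (?E \<union> ?L \<union> ?T)"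
  proof
    fix f assume "f \<in> {f \<in> Kn_edges n. x \<in> f \<and> timestamp f < saturation_time x}"
    then obtain y where "f = {x, y}" "y < n"
      "precedes y x \<or> (precedes x y \<and> {x, y} \<in> A) \<or> (y \<in> twins x \<and> 2 * tau = r + 2)"
      using early_edge_partner[OF assms] by blast
    then show "f \<in> (\<lambda>y. {x, y}) ` (?E \<union> ?L \<union> ?T)"
      by auto
  qed
  moreover have "finite ((\<lambda>y. {x, y}) ` (?E \<union> ?L \<union> ?T))"
    by (simp add: twins_def)
  ultimately have "degree_before x (saturation_time x) \<le> card ((\<lambda>y. {x, y}) ` (?E \<union> ?L \<union> ?T))"
    unfolding degree_before_def by (simp add: card_mono)
  then have "tau \<le> card ((\<lambda>y. {x, y}) ` (?E \<union> ?L \<union> ?T))"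
    using tau_le_degree_before_saturation_time[OF assms] by linarith
  also have "\<dots> \<le> card (?E \<union> ?L \<union> ?T)"
    by (rule card_image_le) (simp add: twins_def)
  also have "\<dots> \<le> card ?E + card ?L + card ?T"
    using card_Un_le[of "?E \<union> ?L" ?T] card_Un_le[of ?E ?L] by linarith
  also have "card ?T \<le> (if 2 * tau = r + 2 \<and> twins x \<noteq> {} then 1 else 0)"
    using card_twins[OF assms] by auto
  finally show ?thesis
    unfolding rank_def later_seeds_def by simp
qed

lemma rank_less: "x < n \<Longrightarrow> rank x < n"
proof -
  assume "x < n"
  have "{y \<in> {..<n}. precedes y x} \<subseteq> {..<n} - {x}"
    using precedes_irrefl by auto
  then have "rank x \<le> card ({..<n} - {x})"
    unfolding rank_def by (intro card_mono) auto
  then show ?thesis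
    using \<open>x < n\<close> by simp
qed

lemma rank_strict_mono: "x < n \<Longrightarrow> precedes x y \<Longrightarrow> rank x < rank y"
proof -
  assume "x < n" "precedes x y"
  then have "{z \<in> {..<n}. precedes z x} \<subset> {z \<in> {..<n}. precedes z y}"
    using precedes_trans precedes_irrefl by blast
  then show ?thesis
    unfolding rank_def by (intro psubset_card_mono) auto
qed

lemma inj_on_rank: "inj_on rank {..<n}"
  by (rule inj_onI) (metis lessThan_iff nat_neq_iff precedes_total rank_strict_mono)

lemma bij_betw_rank: "bij_betw rank {..<n} {..<n}"
proof -
  have "rank ` {..<n} = {..<n}"
    using rank_less inj_on_rank by (intro card_subset_eq) (auto simp: card_image)
  then show ?thesis
    using inj_on_rank by (simp add: bij_betw_def)
qed

lemma bij_betw_rank_less: "bij_betw rank {x \<in> {..<n}. rank x < tau} {..<tau}"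
proof -
  have "rank ` {x \<in> {..<n}. rank x < tau} = {k \<in> rank ` {..<n}. k < tau}"
    by auto
  also have "\<dots> = {..<tau}"
    using bij_betw_rank tau_less unfolding bij_betw_def by auto
  finally have "rank ` {x \<in> {..<n}. rank x < tau} = {..<tau}" .
  moreover have "inj_on rank {x \<in> {..<n}. rank x < tau}"
    by (rule inj_on_subset[OF inj_on_rank]) auto
  ultimately show ?thesis
    by (simp add: bij_betw_def)
qed

lemma rank_eq_Suc_rank:
  assumes "x < n" "precedes x y" and between: "\<And>z. z < n \<Longrightarrow> precedes x z \<Longrightarrow> \<not> precedes z y"
  shows "rank y = Suc (rank x)"
proof -
  have "{z \<in> {..<n}. precedes z y} = insert x {z \<in> {..<n}. precedes z x}"
  proof (intro set_eqI iffI)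
    fix z assume "z \<in> {z \<in> {..<n}. precedes z y}"
    then show "z \<in> insert x {z \<in> {..<n}. precedes z x}"
      using between[of z] precedes_total[of z x] by auto
  qed (use assms precedes_trans in auto)
  then show ?thesis
    unfolding rank_def using precedes_irrefl by simp
qed

text \<open>A vertex between \<open>x\<close> and its twin, or a twin of the twin, would be a third vertex
  with the same saturation time.\<close>

lemma twin_next_rank:
  assumes "x < n" "twins x \<noteq> {}"
  obtains y where "y < n" "rank y = Suc (rank x)" "twins y = {}"
proof -
  obtain y where y: "y < n" "precedes x y" "saturation_time y = saturation_time x" "2 \<le> saturation_time x"
    using assms(2) unfolding twins_def by auto
  have "\<not> precedes z y" if "z < n" "precedes x z" for z
  proof
    assume "precedes z y"
    then have "saturation_time z = saturation_time x"
      using saturation_time_mono[of x z] saturation_time_mono[of z y] that y(3) by simp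
    then show False
      using no_three_saturate_together[of x z y] assms(1) y that \<open>precedes z y\<close> precedes_irrefl by metis
  qed
  then have "rank y = Suc (rank x)"
    using rank_eq_Suc_rank[OF assms(1) y(2)] by blast
  moreover have "twins y = {}"
  proof (rule ccontr)
    assume "twins y \<noteq> {}"
    then obtain w where "w < n" "precedes y w" "saturation_time w = saturation_time x"
      using y(3) unfolding twins_def by auto
    then show False
      using no_three_saturate_together[of x y w] assms(1) y precedes_trans precedes_irrefl by metis
  qed
  ultimately show thesis
    using that y(1) by blast
qed

lemma card_seeds_eq_sum_later_seeds: "card A = (\<Sum>x<n. later_seeds x)"
proof -
  let ?P = "SIGMA x:{..<n}. {y \<in> {..<n}. precedes x y \<and> {x, y} \<in> A}"
  have "inj_on (\<lambda>(x, y). {x, y}) ?P"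
    by (rule inj_onI) (auto simp: doubleton_eq_iff precedes_irrefl dest: precedes_trans)
  moreover have "(\<lambda>(x, y). {x, y}) ` ?P = A"
  proof
    show "A \<subseteq> (\<lambda>(x, y). {x, y}) ` ?P"
    proof
      fix e assume "e \<in> A"
      have "e \<in> Kn_edges n"
        using A_subset \<open>e \<in> A\<close> by (rule subsetD)
      then obtain x y where "x \<noteq> y" "x < n" "y < n" "e = {x, y}"
        by (auto simp: Kn_edges_iff)
      then show "e \<in> (\<lambda>(x, y). {x, y}) ` ?P"
        using precedes_total[of x y] \<open>e \<in> A\<close>
        by (auto simp: insert_commute intro: image_eqI[of _ _ "(x, y)"] image_eqI[of _ _ "(y, x)"])
    qed
  qed auto
  ultimately have "card A = card ?P"
    using card_image by fastforce
  then show ?thesis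
    unfolding later_seeds_def by simp
qed

lemma card_with_twin: "card {x \<in> {..<n}. rank x < tau \<and> twins x \<noteq> {}} \<le> (tau + 1) div 2"
proof -
  let ?W = "{x \<in> {..<n}. rank x < tau \<and> twins x \<noteq> {}}"
  have "card ?W = card (rank ` ?W)"
    by (rule card_image[symmetric]) (rule inj_on_subset[OF inj_on_rank], auto)
  also have "\<dots> \<le> (tau + 1) div 2"
  proof (rule card_le_half_if_no_consecutive)
    show "rank ` ?W \<subseteq> {..<tau}"
      by auto
    fix k assume "k \<in> rank ` ?W"
    then obtain x where x: "x < n" "twins x \<noteq> {}" "k = rank x"
      by auto
    obtain y where y: "y < n" "rank y = Suc (rank x)" "twins y = {}"
      using twin_next_rank[OF x(1,2)] .
    show "Suc k \<notin> rank ` ?W"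
    proof
      assume "Suc k \<in> rank ` ?W"
      then obtain z where z: "Suc k = rank z" "z \<in> ?W"
        by (rule imageE)
      then have "z = y"
        using inj_onD[OF inj_on_rank, of z y] x(3) y(1,2) by simp
      then show False
        using z(2) y(3) by simp
    qed
  qed
  finally show ?thesis .
qed

lemma triangle_le_card_seeds:
  "tau * (tau + 1) div 2 \<le> card A + (if 2 * tau = r + 2 then (tau + 1) div 2 else 0)"
proof -
  let ?S = "{x \<in> {..<n}. rank x < tau}"
    and ?twin = "\<lambda>x. if 2 * tau = r + 2 \<and> twins x \<noteq> {} then 1 else 0 :: nat"
  have "tau * (tau + 1) div 2 = (\<Sum>x\<in>?S. tau - rank x)"
    using sum.reindex_bij_betw[OF bij_betw_rank_less, of "\<lambda>k. tau - k"] by (simp add: sum_lessThan_diff)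
  also have "\<dots> \<le> (\<Sum>x\<in>?S. later_seeds x) + (\<Sum>x\<in>?S. ?twin x)"
    unfolding sum.distrib[symmetric]
  proof (rule sum_mono)
    fix x assume "x \<in> ?S"
    then show "tau - rank x \<le> later_seeds x + ?twin x"
      using tau_le_rank_add_later_seeds[of x] by simp
  qed
  finally have "tau * (tau + 1) div 2 \<le> (\<Sum>x\<in>?S. later_seeds x) + (\<Sum>x\<in>?S. ?twin x)" .
  moreover have "(\<Sum>x\<in>?S. later_seeds x) \<le> card A"
    unfolding card_seeds_eq_sum_later_seeds by (rule sum_mono2) auto
  moreover have "(\<Sum>x\<in>?S. ?twin x) \<le> (if 2 * tau = r + 2 then (tau + 1) div 2 else 0)"
    using card_with_twin by (simp add: sum.If_cases Int_def conj_assoc)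
  ultimately show ?thesis
    by linarith
qed

end

lemma lower_bound:
  assumes "percolating (Kn_edges n) line_adj r A" "(r + 1) div 2 + 2 \<le> n"
  shows "(r + 2)\<^sup>2 div 8 \<le> card A"
proof -
  define tau where "tau = r div 2 + 1"
  interpret Kn_line_saturation n r A tau
    using assms unfolding percolating_def tau_def by unfold_locales auto
  show ?thesis
  proof (cases "even r")
    case True
    then have "r + 2 = 2 * tau"
      unfolding tau_def by auto
    then show ?thesis
      using triangle_le_card_seeds triangle_eq_half_square[of tau] square_double_div_8[of tau] by simp
  next
    case False
    then have "r + 2 = 2 * tau + 1"
      unfolding tau_def by presburger
    then show ?thesis
      using triangle_le_card_seeds square_Suc_double_div_8[of tau] by simp
  qed
qed

theorem theorem5p4:
  fixes n r :: nat
  assumes "n \<ge> 1" and "r \<ge> 1"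
  shows "min_perc (Kn_edges n) line_adj r =
           (if n \<ge> nat \<lceil>real r / 2\<rceil> + 2 then (r + 2)^2 div 8 else n choose 2)"
proof (cases "n \<ge> nat \<lceil>real r / 2\<rceil> + 2")
  case True
  then have "(r + 1) div 2 + 2 \<le> n"
    by (simp add: nat_ceiling_half)
  moreover have "0 < r"
    using assms(2) by simp
  ultimately obtain A where "percolating (Kn_edges n) line_adj r A" "card A \<le> (r + 2)\<^sup>2 div 8"
    using upper_bound by blast
  then show ?thesis
    using True lower_bound \<open>(r + 1) div 2 + 2 \<le> n\<close> by (simp add: min_perc_eqI)
next
  case False
  then have "2 * (n - 2) < r"
    using assms(2) by (simp add: nat_ceiling_half)
  then show ?thesis
    using False min_perc_Kn_edges_if_degree_less by simp
qed

end
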